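(* Let $\omega=\frac{-1+\sqrt{-3}}{2}$. (1) $\{\operatorname{Tr} M : M\in G_q(\omega)\}=\{0,\ \pm\omega^j,\ \pm 2\omega^j : j=0,1,2\}$. (2) For $M_q\in G_q$, let $f(q)=\operatorname{Tr} M_q\in\mathbb{Z}[q,q^{-1}]$. Then the following are equivalent: $f(1)$ is a multiple of $3$; $f(\omega)=0$; $f(q)$ is divisible by $[3]_q=q^2+q+1$.
   Context: Let $q$ be a formal parameter and let $R_q=\begin{pmatrix} q & 1\\ 0 & 1\end{pmatrix}$, $S_q=\begin{pmatrix} 0 & -q^{-1}\\ 1 & 0\end{pmatrix}\in \mathrm{GL}(2,\mathbb{Z}[q,q^{-1}])$. Let $G_q=\langle R_q,S_q\rangle$ be the group they generate. For $\zeta\in\mathbb{C}^*$, set $G_q(\zeta)=\{M_q|_{q=\zeta} : M_q\in G_q\}\subset \mathrm{GL}(2,\mathbb{C})$. *)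

theory Defs
  imports "HOL-Analysis.Analysis" "HOL-Computational_Algebra.Polynomial"
begin

definition mat2 :: "'a \<Rightarrow> 'a \<Rightarrow> 'a \<Rightarrow> 'a \<Rightarrow> 'a^2^2" where
  "mat2 a b c d = (\<chi> i j. if i = 1 then (if j = 1 then a else b) else (if j = 1 then c else d))"

definition tr2 :: "'a::semiring_1^2^2 \<Rightarrow> 'a" where
  "tr2 M = M $ 1 $ 1 + M $ 2 $ 2"

text \<open>Laurent polynomials in Z[q,q^-1] are represented as pairs (k, p) standing for
  q^(-k) * p(q) with p an integer polynomial.  A matrix over Z[q,q^-1] is represented as
  (k, P) standing for q^(-k) * P with P a 2x2 matrix over int poly.\<close>

type_synonym lmat = "nat \<times> (int poly^2^2)"
type_synonym lpoly = "nat \<times> int poly"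

definition lmult :: "lmat \<Rightarrow> lmat \<Rightarrow> lmat" where
  "lmult M N = (fst M + fst N, snd M ** snd N)"

definition R_q :: lmat where
  "R_q = (0, mat2 [:0,1:] 1 0 1)"

definition S_q :: lmat where
  "S_q = (1, mat2 0 (-1) [:0,1:] 0)"

definition R_q_inv :: lmat where
  "R_q_inv = (1, mat2 1 (-1) 0 [:0,1:])"

definition S_q_inv :: lmat where
  "S_q_inv = (0, mat2 0 1 [:0,-1:] 0)"

inductive_set G_q :: "lmat set" where
  G_q_one: "(0, mat 1) \<in> G_q"
| G_q_step: "M \<in> G_q \<Longrightarrow> g \<in> {R_q, S_q, R_q_inv, S_q_inv} \<Longrightarrow> lmult M g \<in> G_q"

definition leval :: "complex \<Rightarrow> lpoly \<Rightarrow> complex" where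
  "leval z f = poly (map_poly of_int (snd f)) z / z ^ fst f"

definition lmat_eval :: "complex \<Rightarrow> lmat \<Rightarrow> complex^2^2" where
  "lmat_eval z M = (\<chi> i j. leval z (fst M, snd M $ i $ j))"

definition G_q_at :: "complex \<Rightarrow> (complex^2^2) set" where
  "G_q_at z = lmat_eval z ` G_q"

definition ltrace :: "lmat \<Rightarrow> lpoly" where
  "ltrace M = (fst M, tr2 (snd M))"

text \<open>Divisibility in Z[q,q^-1]: q^-k a divides q^-l b iff b q^-l = a q^-k * h q^-m
  for some integer polynomial h and m, i.e. q^(k+m) b = q^l a h.\<close>

definition ldvd :: "lpoly \<Rightarrow> lpoly \<Rightarrow> bool" where
  "ldvd f g \<longleftrightarrow> (\<exists>h m. monom 1 (fst f + m) * snd g = monom 1 (fst g) * snd f * h)"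

definition qint3 :: lpoly where
  "qint3 = (0, [:1,1,1:])"

definition omega :: complex where
  "omega = (-1 + \<i> * sqrt 3) / 2"

end

theory Submission
  imports Defs
begin

text \<open>At \<open>q = \<omega>\<close> all generators have entries in the Eisenstein integers \<open>\<int>[\<omega>]\<close>,
  so \<open>G\<^sub>q(\<omega>)\<close> can be enumerated exactly: a breadth-first search from the identity
  closes up after 72 matrices, whose traces are \<open>0, \<plusminus>\<omega>\<^sup>j, \<plusminus>2\<omega>\<^sup>j\<close>.
  For (2) write \<open>f = q\<^sup>-\<^sup>k p\<close> and divide \<open>p\<close> by the monic \<open>[3]\<^sub>q\<close> with remainder
  \<open>r\<^sub>0 + r\<^sub>1 q\<close>. Then \<open>p(\<omega>) = r\<^sub>0 + r\<^sub>1\<omega>\<close> and \<open>p(1) \<equiv> r\<^sub>0 + r\<^sub>1 (mod 3)\<close>, as \<open>[3]\<^sub>1 = 3\<close>.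
  Among the thirteen traces \<open>a + b\<omega>\<close> only \<open>0\<close> has \<open>a + b \<equiv> 0 (mod 3)\<close>, so \<open>3 | f(1)\<close>
  iff \<open>f(\<omega>) = 0\<close>; and \<open>f(\<omega>) = 0\<close> iff the remainder vanishes, i.e. iff \<open>[3]\<^sub>q | f\<close>.\<close>

definition ipoly :: "int poly \<Rightarrow> complex \<Rightarrow> complex" where
  "ipoly p z = poly (map_poly of_int p) z"

lemma ipoly_0 [simp]: "ipoly 0 z = 0"
  by (simp add: ipoly_def)

lemma ipoly_pCons [simp]: "ipoly (pCons a p) z = of_int a + z * ipoly p z"
  by (simp add: ipoly_def map_poly_pCons)

lemma ipoly_1 [simp]: "ipoly 1 z = 1"
  by (simp add: one_pCons)

lemma ipoly_add [simp]: "ipoly (p + q) z = ipoly p z + ipoly q z"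
proof (induction p arbitrary: q)
  case (pCons a p)
  then show ?case
    by (cases q) (simp add: algebra_simps)
qed simp

lemma ipoly_uminus [simp]: "ipoly (- p) z = - ipoly p z"
  by (induction p) (simp_all add: algebra_simps)

lemma ipoly_smult [simp]: "ipoly (smult a p) z = of_int a * ipoly p z"
  by (induction p) (simp_all add: algebra_simps)

lemma ipoly_mult [simp]: "ipoly (p * q) z = ipoly p z * ipoly q z"
  by (induction p) (simp_all add: algebra_simps)

lemma ipoly_monom_1 [simp]: "ipoly (monom 1 n) z = z ^ n"
  by (simp add: ipoly_def map_poly_monom poly_monom)

lemma ipoly_of_int: "ipoly p (of_int x) = of_int (poly p x)"
  by (induction p) simp_all

lemma monic_quadratic_division:
  fixes p :: "'a::comm_ring_1 poly"
  shows "\<exists>g r0 r1. p = [:c0, c1, 1:] * g + [:r0, r1:]"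
proof (induction p)
  case 0
  show ?case
    by (rule exI[of _ 0]) simp
next
  case (pCons c p)
  then obtain g r0 r1 where p: "p = [:c0, c1, 1:] * g + [:r0, r1:]"
    by blast
  have "pCons c p = [:c0, c1, 1:] * pCons r1 g + [:c - r1 * c0, r0 - r1 * c1:]"
    by (simp add: p mult_pCons_right algebra_simps)
  then show ?case
    by blast
qed

lemma mat2_mult:
  "(mat2 a b c d ** mat2 e f g h :: 'a::semiring_1^2^2) =
     mat2 (a * e + b * g) (a * f + b * h) (c * e + d * g) (c * f + d * h)"
  by (simp add: vec_eq_iff forall_2 sum_2 matrix_matrix_mult_def mat2_def)

lemma mat_1_eq_mat2: "(mat 1 :: 'a::zero_neq_one^2^2) = mat2 1 0 0 1"
  by (simp add: mat_def mat2_def vec_eq_iff forall_2)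

lemma leval_eq_ipoly: "leval z (k, p) = ipoly p z / z ^ k"
  by (simp add: leval_def ipoly_def)

lemma leval_1: "leval 1 (k, p) = of_int (poly p 1)"
  using ipoly_of_int[of p 1] by (simp add: leval_eq_ipoly)

lemma lmat_eval_mat2:
  "lmat_eval z (k, mat2 a b c d) = mat2 (leval z (k, a)) (leval z (k, b)) (leval z (k, c)) (leval z (k, d))"
  by (simp add: lmat_eval_def mat2_def vec_eq_iff)

lemma lmat_eval_lmult:
  assumes "z \<noteq> 0"
  shows "lmat_eval z (lmult M N) = lmat_eval z M ** lmat_eval z N"
proof -
  have "lmat_eval z (lmult M N) $ i $ j = (lmat_eval z M ** lmat_eval z N) $ i $ j" for i j
    using assms
    by (simp add: lmat_eval_def lmult_def leval_def matrix_matrix_mult_def sum_2 power_add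
        field_simps flip: ipoly_def)
  then show ?thesis
    by (simp add: vec_eq_iff)
qed

lemma tr2_lmat_eval: "tr2 (lmat_eval z M) = leval z (ltrace M)"
  by (simp add: tr2_def lmat_eval_def ltrace_def leval_def add_divide_distrib flip: ipoly_def)

section \<open>Breadth-first enumeration of an orbit\<close>

definition orbit_step ::
  "('a \<Rightarrow> 'g \<Rightarrow> 'a) \<Rightarrow> 'g list \<Rightarrow> 'a list \<times> 'a list \<Rightarrow> 'a list \<times> 'a list" where
  "orbit_step act gs = (\<lambda>(seen, todo).
     let fresh = remdups (filter (\<lambda>y. y \<notin> set seen) [act x g. x \<leftarrow> todo, g \<leftarrow> gs])
     in (seen @ fresh, fresh))"

definition orbit_search :: "('a \<Rightarrow> 'g \<Rightarrow> 'a) \<Rightarrow> 'g list \<Rightarrow> nat \<Rightarrow> 'a \<Rightarrow> 'a list \<times> 'a list" where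
  "orbit_search act gs n x0 = (orbit_step act gs ^^ n) ([x0], [x0])"

text \<open>Elements that have left \<open>todo\<close> have all their successors in \<open>seen\<close>,
  so an empty \<open>todo\<close> certifies that \<open>seen\<close> is closed.\<close>

definition orbit_invariant :: "('a \<Rightarrow> 'g \<Rightarrow> 'a) \<Rightarrow> 'g list \<Rightarrow> 'a \<Rightarrow> 'a list \<times> 'a list \<Rightarrow> bool" where
  "orbit_invariant act gs x0 = (\<lambda>(seen, todo). x0 \<in> set seen \<and> set todo \<subseteq> set seen \<and>
     (\<forall>x \<in> set seen - set todo. \<forall>g \<in> set gs. act x g \<in> set seen))"

lemma orbit_step_invariant:
  "orbit_invariant act gs x0 s \<Longrightarrow> orbit_invariant act gs x0 (orbit_step act gs s)"
  by (cases s) (auto simp: orbit_invariant_def orbit_step_def Let_def)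

lemma orbit_search_invariant: "orbit_invariant act gs x0 (orbit_search act gs n x0)"
proof (induction n)
  case 0
  show ?case
    by (simp add: orbit_search_def orbit_invariant_def)
next
  case (Suc n)
  then show ?case
    using orbit_step_invariant by (simp add: orbit_search_def)
qed

lemma orbit_search_closed:
  assumes "orbit_search act gs n x0 = (xs, [])"
  shows "x0 \<in> set xs" and "x \<in> set xs \<Longrightarrow> g \<in> set gs \<Longrightarrow> act x g \<in> set xs"
  using orbit_search_invariant[of act gs x0 n] by (simp_all add: assms orbit_invariant_def)

lemma orbit_search_reachable:
  assumes "P x0" and "\<And>x g. P x \<Longrightarrow> g \<in> set gs \<Longrightarrow> P (act x g)"
    and "orbit_search act gs n x0 = (xs, todo)" and "x \<in> set xs"
  shows "P x"
proof -
  have "\<forall>y \<in> set (fst (orbit_search act gs n x0)) \<union> set (snd (orbit_search act gs n x0)). P y"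
  proof (induction n)
    case 0
    show ?case
      using assms(1) by (simp add: orbit_search_def)
  next
    case (Suc n)
    then show ?case
      using assms(2)
      by (cases "orbit_search act gs n x0") (auto simp: orbit_search_def orbit_step_def Let_def)
  qed
  then show ?thesis
    using assms(3,4) by simp
qed

section \<open>Eisenstein integers and evaluation at \<open>\<omega>\<close>\<close>

lemma omega_squared: "omega\<^sup>2 = - 1 - omega"
  by (simp add: omega_def complex_eq_iff power2_eq_square field_simps)

lemma omega_cubed: "omega ^ 3 = 1"
proof -
  have "omega ^ 3 = omega * omega\<^sup>2"
    by (simp add: power3_eq_cube power2_eq_square)
  also have "\<dots> = omega * (- 1 - omega)"
    by (simp only: omega_squared)
  also have "\<dots> = - omega - omega\<^sup>2"
    by (simp add: algebra_simps power2_eq_square)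
  also have "\<dots> = 1"
    by (simp add: omega_squared)
  finally show ?thesis .
qed

lemma omega_nonzero [simp]: "omega \<noteq> 0"
  using omega_cubed by auto

lemma inverse_omega: "inverse omega = - 1 - omega"
proof (rule inverse_unique)
  have "omega * omega\<^sup>2 = 1"
    using omega_cubed by (simp add: power3_eq_cube power2_eq_square mult.assoc)
  then show "omega * (- 1 - omega) = 1"
    by (simp only: omega_squared)
qed

lemma ipoly_qint3_omega: "ipoly [:1, 1, 1:] omega = 0"
  using omega_squared by (simp add: algebra_simps power2_eq_square)

type_synonym eis = "int \<times> int"

definition eis_val :: "eis \<Rightarrow> complex" where
  "eis_val x = of_int (fst x) + of_int (snd x) * omega"

lemma eis_val_inject: "eis_val x = eis_val y \<longleftrightarrow> x = y"
proof
  assume "eis_val x = eis_val y"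
  then have "Im (eis_val x) = Im (eis_val y)" "Re (eis_val x) = Re (eis_val y)"
    by simp_all
  then show "x = y"
    by (simp add: eis_val_def omega_def prod_eq_iff)
qed simp

lemma eis_val_eq_0_iff: "eis_val x = 0 \<longleftrightarrow> x = (0, 0)"
  using eis_val_inject[of x "(0, 0)"] by (simp add: eis_val_def)

fun eis_add :: "eis \<Rightarrow> eis \<Rightarrow> eis" where
  "eis_add (a, b) (c, d) = (a + c, b + d)"

fun eis_mult :: "eis \<Rightarrow> eis \<Rightarrow> eis" where
  "eis_mult (a, b) (c, d) = (a * c - b * d, a * d + b * c - b * d)"

lemma eis_val_add: "eis_val (eis_add x y) = eis_val x + eis_val y"
  by (cases x; cases y) (simp add: eis_val_def algebra_simps)

lemma eis_val_mult: "eis_val (eis_mult x y) = eis_val x * eis_val y"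
proof (cases x; cases y)
  fix a b c d
  assume xy: "x = (a, b)" "y = (c, d)"
  have "of_int b * of_int d * (omega\<^sup>2 + omega + 1) = 0"
    by (simp add: omega_squared)
  then show ?thesis
    by (simp add: xy eis_val_def algebra_simps power2_eq_square)
qed

lemma ipoly_omega_qint3_division:
  "ipoly ([:1, 1, 1:] * g + [:r0, r1:]) omega = eis_val (r0, r1)"
  by (simp only: ipoly_add ipoly_mult ipoly_qint3_omega) (simp add: eis_val_def mult.commute)

lemma ipoly_omega_eis:
  "\<exists>a b. ipoly p omega = eis_val (a, b) \<and> 3 dvd poly p 1 - (a + b)"
proof -
  obtain g r0 r1 where p: "p = [:1, 1, 1:] * g + [:r0, r1:]"
    using monic_quadratic_division by blast
  have "poly p 1 - (r0 + r1) = 3 * poly g 1"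
    by (simp add: p)
  then show ?thesis
    using ipoly_omega_qint3_division p by (metis dvd_triv_left)
qed

lemma ipoly_omega_eq_0_iff: "ipoly p omega = 0 \<longleftrightarrow> [:1, 1, 1:] dvd p"
proof
  assume root: "ipoly p omega = 0"
  obtain g r0 r1 where p: "p = [:1, 1, 1:] * g + [:r0, r1:]"
    using monic_quadratic_division by blast
  have "eis_val (r0, r1) = 0"
    using root ipoly_omega_qint3_division p by simp
  then have "p = [:1, 1, 1:] * g"
    by (simp add: p eis_val_eq_0_iff)
  then show "[:1, 1, 1:] dvd p" ..
next
  assume "[:1, 1, 1:] dvd p"
  then obtain h where "p = [:1, 1, 1:] * h" ..
  then show "ipoly p omega = 0"
    by (simp only: ipoly_mult ipoly_qint3_omega mult_zero_left)
qed

lemma leval_omega: "leval omega (k, p) = ipoly (monom 1 (2 * k) * p) omega"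
proof -
  have "omega ^ (2 * k) * omega ^ k = (omega ^ 3) ^ k"
    by (simp flip: power_add power_mult)
  then have "omega ^ (2 * k) * omega ^ k = 1"
    by (simp add: omega_cubed)
  then show ?thesis
    by (simp add: leval_eq_ipoly field_simps)
qed

lemma leval_omega_eis:
  "\<exists>a b. leval omega (k, p) = eis_val (a, b) \<and> 3 dvd poly p 1 - (a + b)"
  using ipoly_omega_eis[of "monom 1 (2 * k) * p"] by (simp add: leval_omega poly_monom)

lemma ldvd_qint3_iff: "ldvd qint3 (k, p) \<longleftrightarrow> [:1, 1, 1:] dvd p"
proof
  assume "ldvd qint3 (k, p)"
  then obtain h m where "monom 1 m * p = monom 1 k * [:1, 1, 1:] * h"
    by (auto simp: ldvd_def qint3_def)
  then have "omega ^ m * ipoly p omega = 0"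
    by (metis ipoly_mult ipoly_monom_1 ipoly_qint3_omega mult_zero_left mult_zero_right)
  then show "[:1, 1, 1:] dvd p"
    by (simp add: ipoly_omega_eq_0_iff)
next
  assume "[:1, 1, 1:] dvd p"
  then obtain h where "p = [:1, 1, 1:] * h" ..
  then have "monom 1 (0 + k) * p = monom 1 k * [:1, 1, 1:] * h"
    by (simp only: add_0 mult.assoc)
  then show "ldvd qint3 (k, p)"
    unfolding ldvd_def qint3_def by auto
qed

lemma leval_omega_eq_0_iff_ldvd_qint3: "leval omega f = 0 \<longleftrightarrow> ldvd qint3 f"
  by (cases f) (simp add: leval_eq_ipoly ldvd_qint3_iff ipoly_omega_eq_0_iff)

section \<open>The group \<open>G\<^sub>q(\<omega>)\<close>\<close>

type_synonym emat = "eis \<times> eis \<times> eis \<times> eis"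

fun emat_val :: "emat \<Rightarrow> complex^2^2" where
  "emat_val (a, b, c, d) = mat2 (eis_val a) (eis_val b) (eis_val c) (eis_val d)"

fun emat_mult :: "emat \<Rightarrow> emat \<Rightarrow> emat" where
  "emat_mult (a, b, c, d) (e, f, g, h) =
     (eis_add (eis_mult a e) (eis_mult b g), eis_add (eis_mult a f) (eis_mult b h),
      eis_add (eis_mult c e) (eis_mult d g), eis_add (eis_mult c f) (eis_mult d h))"

fun emat_trace :: "emat \<Rightarrow> eis" where
  "emat_trace (a, b, c, d) = eis_add a d"

lemma emat_val_mult: "emat_val (emat_mult A B) = emat_val A ** emat_val B"
  by (cases A; cases B) (simp add: mat2_mult eis_val_mult eis_val_add del: eis_mult.simps eis_add.simps)

lemma tr2_emat_val: "tr2 (emat_val A) = eis_val (emat_trace A)"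
  by (cases A) (simp add: tr2_def mat2_def eis_val_add del: eis_add.simps)

definition emat_one :: emat where
  "emat_one = ((1, 0), (0, 0), (0, 0), (1, 0))"

definition emat_gens :: "emat list" where
  "emat_gens = [((0, 1), (1, 0), (0, 0), (1, 0)), ((0, 0), (1, 1), (1, 0), (0, 0)),
                ((-1, -1), (1, 1), (0, 0), (1, 0)), ((0, 0), (1, 0), (0, -1), (0, 0))]"

lemma lmat_eval_omega_one: "lmat_eval omega (0, mat 1) = emat_val emat_one"
  by (simp add: mat_1_eq_mat2 lmat_eval_mat2 leval_eq_ipoly emat_one_def eis_val_def)

lemma lmat_eval_omega_generators:
  "lmat_eval omega ` {R_q, S_q, R_q_inv, S_q_inv} = emat_val ` set emat_gens"
  by (simp add: R_q_def S_q_def R_q_inv_def S_q_inv_def emat_gens_def lmat_eval_mat2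
      leval_eq_ipoly eis_val_def divide_inverse inverse_omega add.commute[of omega 1])

definition G_omega_traces :: "eis set" where
  "G_omega_traces = {(0, 0), (1, 0), (0, 1), (-1, -1), (-1, 0), (0, -1), (1, 1),
                     (2, 0), (0, 2), (-2, -2), (-2, 0), (0, -2), (2, 2)}"

text \<open>The search finds the 72 elements of \<open>G\<^sub>q(\<omega>)\<close> in six rounds; the seventh finds nothing new.\<close>

lemma orbit_search_G_omega:
  "case orbit_search emat_mult emat_gens 7 emat_one of (xs, todo) \<Rightarrow>
     todo = [] \<and> emat_trace ` set xs = G_omega_traces"
  by code_simp

lemma lmat_eval_omega_in_orbit:
  assumes search: "orbit_search emat_mult emat_gens n emat_one = (xs, [])" and "M \<in> G_q"
  shows "\<exists>A \<in> set xs. lmat_eval omega M = emat_val A"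
  using \<open>M \<in> G_q\<close>
proof (induction rule: G_q.induct)
  case G_q_one
  then show ?case
    using orbit_search_closed(1)[OF search] lmat_eval_omega_one by blast
next
  case (G_q_step M g)
  then obtain A where A: "A \<in> set xs" "lmat_eval omega M = emat_val A"
    by blast
  obtain E where E: "E \<in> set emat_gens" "lmat_eval omega g = emat_val E"
    using G_q_step.hyps(2) lmat_eval_omega_generators by blast
  have "lmat_eval omega (lmult M g) = emat_val (emat_mult A E)"
    by (simp add: lmat_eval_lmult A(2) E(2) emat_val_mult del: emat_val.simps emat_mult.simps)
  then show ?case
    using orbit_search_closed(2)[OF search A(1) E(1)] by blast
qed

lemma emat_val_orbit_in_G_q_at_omega:
  assumes search: "orbit_search emat_mult emat_gens n emat_one = (xs, todo)" and "A \<in> set xs"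
  shows "emat_val A \<in> G_q_at omega"
proof (rule orbit_search_reachable[OF _ _ search \<open>A \<in> set xs\<close>])
  show "emat_val emat_one \<in> G_q_at omega"
    using G_q.G_q_one lmat_eval_omega_one by (metis G_q_at_def image_eqI)
next
  fix B E
  assume B: "emat_val B \<in> G_q_at omega" and E: "E \<in> set emat_gens"
  obtain M where M: "M \<in> G_q" "emat_val B = lmat_eval omega M"
    using B unfolding G_q_at_def by blast
  have "emat_val E \<in> lmat_eval omega ` {R_q, S_q, R_q_inv, S_q_inv}"
    unfolding lmat_eval_omega_generators using E by (rule imageI)
  then obtain g where g: "g \<in> {R_q, S_q, R_q_inv, S_q_inv}" "emat_val E = lmat_eval omega g"
    by blast
  have "emat_val (emat_mult B E) = lmat_eval omega (lmult M g)"
    by (simp add: emat_val_mult M(2) g(2) lmat_eval_lmult del: emat_val.simps emat_mult.simps)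
  then show "emat_val (emat_mult B E) \<in> G_q_at omega"
    unfolding G_q_at_def using G_q.G_q_step[OF M(1) g(1)] by (rule image_eqI)
qed

lemma G_q_at_omega_eq:
  assumes "orbit_search emat_mult emat_gens n emat_one = (xs, [])"
  shows "G_q_at omega = emat_val ` set xs"
proof
  show "G_q_at omega \<subseteq> emat_val ` set xs"
    using lmat_eval_omega_in_orbit[OF assms] unfolding G_q_at_def by blast
  show "emat_val ` set xs \<subseteq> G_q_at omega"
    using emat_val_orbit_in_G_q_at_omega[OF assms] by blast
qed

lemma traces_G_q_at_omega: "{tr2 M | M. M \<in> G_q_at omega} = eis_val ` G_omega_traces"
proof -
  obtain xs where search: "orbit_search emat_mult emat_gens 7 emat_one = (xs, [])"
    and traces: "emat_trace ` set xs = G_omega_traces"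
    using orbit_search_G_omega by (auto split: prod.splits)
  have "{tr2 M | M. M \<in> G_q_at omega} = tr2 ` emat_val ` set xs"
    unfolding G_q_at_omega_eq[OF search] by blast
  also have "\<dots> = eis_val ` emat_trace ` set xs"
    by (simp only: image_image tr2_emat_val)
  finally show ?thesis
    by (simp only: traces)
qed

lemma eis_val_G_omega_traces:
  "eis_val ` G_omega_traces = {0} \<union> {s * omega ^ j | s j. s \<in> {1, -1, 2, -2} \<and> j \<in> {0, 1, 2::nat}}"
proof -
  define C :: "eis set" where "C = {(1, 0), (-1, 0), (2, 0), (-2, 0)}"
  define U :: "eis set" where "U = {(1, 0), (0, 1), (-1, -1)}"
  have traces: "G_omega_traces = {(0, 0)} \<union> (\<Union>c \<in> C. \<Union>u \<in> U. {eis_mult c u})"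
    by (auto simp: G_omega_traces_def C_def U_def)
  have scalars: "eis_val ` C = {1, -1, 2, -2}"
    by (simp add: C_def eis_val_def)
  have powers: "eis_val ` U = (\<lambda>j. omega ^ j) ` {0, 1, 2}"
    by (simp add: U_def eis_val_def omega_squared)
  have "eis_val ` G_omega_traces = {0} \<union> (\<Union>s \<in> eis_val ` C. \<Union>t \<in> eis_val ` U. {s * t})"
    using eis_val_eq_0_iff[of "(0, 0)"] by (simp add: traces eis_val_mult image_UN)
  also have "\<dots> = {0} \<union> {s * omega ^ j | s j. s \<in> {1, -1, 2, -2} \<and> j \<in> {0, 1, 2::nat}}"
    unfolding scalars powers by blast
  finally show ?thesis .
qed

lemma G_omega_traces_3_dvd_iff: "x \<in> G_omega_traces \<Longrightarrow> 3 dvd fst x + snd x \<longleftrightarrow> x = (0, 0)"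
  by (auto simp: G_omega_traces_def)

lemma G_q_trace_3_dvd_iff:
  assumes "M \<in> G_q"
  shows "(\<exists>m::int. leval 1 (ltrace M) = of_int (3 * m)) \<longleftrightarrow> leval omega (ltrace M) = 0"
proof -
  obtain k p where f: "ltrace M = (k, p)"
    by fastforce
  obtain a b where ab: "leval omega (k, p) = eis_val (a, b)" and cong: "3 dvd poly p 1 - (a + b)"
    using leval_omega_eis by blast
  have "tr2 (lmat_eval omega M) \<in> {tr2 N | N. N \<in> G_q_at omega}"
    using assms by (auto simp: G_q_at_def)
  then have "eis_val (a, b) \<in> eis_val ` G_omega_traces"
    by (simp add: traces_G_q_at_omega tr2_lmat_eval f ab)
  then have trace: "(a, b) \<in> G_omega_traces"
    by (auto simp: eis_val_inject)
  have "(\<exists>m::int. leval 1 (k, p) = of_int (3 * m)) \<longleftrightarrow> 3 dvd poly p 1"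
    by (simp only: leval_1 of_int_eq_iff) (auto simp: dvd_def)
  also have "\<dots> \<longleftrightarrow> 3 dvd a + b"
    using dvd_add_right_iff[OF cong, of "a + b"] by simp
  also have "\<dots> \<longleftrightarrow> leval omega (k, p) = 0"
    using G_omega_traces_3_dvd_iff[OF trace] by (simp add: ab eis_val_eq_0_iff)
  finally show ?thesis
    by (simp only: f)
qed

theorem corollary3p2:
  shows "{tr2 M | M. M \<in> G_q_at omega} =
           {0} \<union> {s * omega ^ j | s j. s \<in> {1, -1, 2, -2} \<and> j \<in> {0, 1, 2::nat}}
       \<and> (\<forall>M \<in> G_q. let f = ltrace M in
           ((\<exists>m::int. leval 1 f = of_int (3 * m)) \<longleftrightarrow> leval omega f = 0)
         \<and> (leval omega f = 0 \<longleftrightarrow> ldvd qint3 f))"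
  using traces_G_q_at_omega eis_val_G_omega_traces G_q_trace_3_dvd_iff leval_omega_eq_0_iff_ldvd_qint3
  by (simp add: Let_def)

end
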